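(* Let $n \ge 3$. (i) Every $(n-1)$-limited rigid word is an isoterm for $\mathbf{A}_n$; in particular every word in $\mathsf{B}_n$ is an isoterm for $\mathbf{A}_n$. (ii) Every $(n-2)$-limited rigid word is an isoterm for $\mathbf{A}_n\{\mathtt{B}_n\}$.
   Context: All varieties are varieties of monoids (signature: associative binary operation and identity constant $1$). Words are elements of the free monoid $X^*$ over a countably infinite set $X$ of variables; identities are pairs of words, and variables may be substituted by $1$. For a variety $\mathbf{V}$ and set $\Sigma$ of identities, $\mathbf{V}\Sigma$ is the subvariety of $\mathbf{V}$ defined by $\Sigma$. $\mathbf{O}$ is the variety defined by $xyt_1xt_2y \approx yxt_1xt_2y$, $xt_1xyt_2y \approx xt_1yxt_2y$, $xt_1yt_2xy \approx xt_1yt_2yx$. For $n\ge3$, $\mathtt{A}_n$ is $x^n t_1\cdots t_n \approx t_1x\,t_2x\cdots t_nx$, $\mathtt{B}_n$ is the set of identities $x^{n-1}t \approx x^{n-2}tx \approx\cdots\approx xtx^{n-2}\approx tx^{n-1}$, $\mathbf{A}_n=\mathbf{O}\{\mathtt{A}_n\}$, and $\mathsf{B}_n=\{x^{n-1-j}tx^{j}:0\le j\le n-1\}$. A rigid word is a word $x^{e_0}t_1x^{e_1}t_2x^{e_2}\cdots t_rx^{e_r}$ with $r\ge0$, $e_i\ge0$, and $x,t_1,\dots,t_r$ distinct variables; it is $k$-limited if $e_0+\cdots+e_r\le k$. A word $\mathbf{w}$ is an isoterm for a variety $\mathbf{V}$ if $\mathbf{V}$ satisfies no identity $\mathbf{w}\approx\mathbf{v}$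 with $\mathbf{v}\ne\mathbf{w}$. *)

theory Defs
  imports Main
begin

text \<open>Variables are natural numbers (a countably infinite set); words are
elements of the free monoid, i.e. lists of variables; the empty list is 1.\<close>

type_synonym word = "nat list"

definition subst_word :: "(nat \<Rightarrow> word) \<Rightarrow> word \<Rightarrow> word" where
  "subst_word \<sigma> w = concat (map \<sigma> w)"

text \<open>Equational consequence (Birkhoff): the fully invariant congruence on the
free monoid generated by a set of identities. A monoid variety defined by
Sigma satisfies u = v iff this relation holds. Substitutions may send
variables to the empty word 1.\<close>

inductive derivable :: "(word \<times> word) set \<Rightarrow> word \<Rightarrow> word \<Rightarrow> bool"
  for \<Sigma> :: "(word \<times> word) set" where
  ax: "(u, v) \<in> \<Sigma> \<Longrightarrow> derivable \<Sigma> u v"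
| refl: "derivable \<Sigma> u u"
| sym: "derivable \<Sigma> u v \<Longrightarrow> derivable \<Sigma> v u"
| trans: "derivable \<Sigma> u v \<Longrightarrow> derivable \<Sigma> v w \<Longrightarrow> derivable \<Sigma> u w"
| subst: "derivable \<Sigma> u v \<Longrightarrow> derivable \<Sigma> (subst_word \<sigma> u) (subst_word \<sigma> v)"
| ctx: "derivable \<Sigma> u v \<Longrightarrow> derivable \<Sigma> (p @ u @ q) (p @ v @ q)"

definition isoterm :: "(word \<times> word) set \<Rightarrow> word \<Rightarrow> bool" where
  "isoterm \<Sigma> w \<longleftrightarrow> (\<forall>v. derivable \<Sigma> w v \<longrightarrow> v = w)"

text \<open>Variables: x = 0, y = 1, t1 = 2, t2 = 3.\<close>
definition O_ids :: "(word \<times> word) set" where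
  "O_ids = {([0,1,2,0,3,1], [1,0,2,0,3,1]),
            ([0,2,0,1,3,1], [0,2,1,0,3,1]),
            ([0,2,1,3,0,1], [0,2,1,3,1,0])}"

text \<open>A_n: x^n t1 ... tn = t1 x t2 x ... tn x, with x = 0 and ti = i.\<close>
definition A_id :: "nat \<Rightarrow> word \<times> word" where
  "A_id n = (replicate n 0 @ [1..<n+1], concat (map (\<lambda>i. [i, 0]) [1..<n+1]))"

text \<open>B_n words: x^(n-1-j) t x^j, with x = 0, t = 1.\<close>
definition B_word :: "nat \<Rightarrow> nat \<Rightarrow> word" where
  "B_word n j = replicate (n - 1 - j) 0 @ [1] @ replicate j 0"

definition B_words :: "nat \<Rightarrow> word set" where
  "B_words n = {B_word n j | j. j \<le> n - 1}"

definition B_ids :: "nat \<Rightarrow> (word \<times> word) set" where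
  "B_ids n = {(B_word n 0, B_word n j) | j. j \<le> n - 1}"

text \<open>Defining identities of A_n = O{A_n} and of A_n{B_n}.\<close>
definition A_var :: "nat \<Rightarrow> (word \<times> word) set" where
  "A_var n = O_ids \<union> {A_id n}"

definition AB_var :: "nat \<Rightarrow> (word \<times> word) set" where
  "AB_var n = A_var n \<union> B_ids n"

text \<open>k-limited rigid words x^e0 t1 x^e1 ... tr x^er.\<close>
definition rigid_limited :: "nat \<Rightarrow> word \<Rightarrow> bool" where
  "rigid_limited k w \<longleftrightarrow> (\<exists>x ts es. distinct (x # ts) \<and> length es = length ts + 1 \<and>
     w = replicate (es ! 0) x @
         concat (map (\<lambda>i. ts ! i # replicate (es ! (i + 1)) x) [0..<length ts]) \<and>
     sum_list es \<le> k)"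

end

theory Submission
  imports Defs
begin

text \<open>Call \<open>w\<close> almost linear if one letter \<open>x\<close> occurs in it at most \<open>k\<close> times and every
other letter at most once; \<open>k\<close>-limited rigid words are of this kind. If \<open>\<sigma>(u)\<close> is a factor
of such a \<open>w\<close>, then a variable occurring twice in \<open>u\<close> is mapped to a power of \<open>x\<close>, and a
variable occurring more than \<open>max 1 k\<close> times in \<open>u\<close> is mapped to the empty word. Both sides
of each identity of \<open>\<^bold>O\<close> contain \<open>x\<close> and \<open>y\<close> twice and become equal once \<open>x\<close> and \<open>y\<close>
commute; both sides of \<open>\<^bold>A\<^sub>n\<close> (resp. of \<open>\<^bold>B\<^sub>n\<close>) contain \<open>x\<close> exactly \<open>n\<close>
(resp. \<open>n - 1\<close>) times and become equal once \<open>x\<close> is erased. So no application of a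
defining identity to a factor of \<open>w\<close> changes \<open>w\<close>, and \<open>w\<close> is an isoterm.\<close>

lemma count_list_replicate: "count_list (replicate m x) c = (if x = c then m else 0)"
  by (induction m) auto

lemma removeAll_replicate: "removeAll x (replicate m x) = []"
  by (induction m) auto

lemma removeAll_concat: "removeAll x (concat xss) = concat (map (removeAll x) xss)"
  by (induction xss) auto

lemma count_list_removeAll: "c \<noteq> x \<Longrightarrow> count_list (removeAll x w) c = count_list w c"
  by (induction w) auto

lemma distinct_count_list_le: "distinct xs \<Longrightarrow> count_list xs c \<le> 1"
  by (induction xs) auto

lemma subst_word_Nil [simp]: "subst_word \<sigma> [] = []"
  and subst_word_Cons [simp]: "subst_word \<sigma> (z # u) = \<sigma> z @ subst_word \<sigma> u"
  and subst_word_append [simp]: "subst_word \<sigma> (u @ v) = subst_word \<sigma> u @ subst_word \<sigma> v"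
  by (simp_all add: subst_word_def)

lemma subst_word_subst_word:
  "subst_word \<tau> (subst_word \<sigma> u) = subst_word (\<lambda>z. subst_word \<tau> (\<sigma> z)) u"
  by (induction u) auto

lemma subst_word_singleton [simp]: "subst_word (\<lambda>z. [z]) u = u"
  by (induction u) auto

lemma subst_word_removeAll: "\<sigma> z = [] \<Longrightarrow> subst_word \<sigma> (removeAll z u) = subst_word \<sigma> u"
  by (induction u) auto

definition stabilizes :: "(word \<times> word) set \<Rightarrow> word \<Rightarrow> bool" where
  "stabilizes \<Sigma> w \<longleftrightarrow> (\<forall>(u, v) \<in> \<Sigma>. \<forall>\<sigma> p q.
     p @ subst_word \<sigma> u @ q = w \<longleftrightarrow> p @ subst_word \<sigma> v @ q = w)"

lemma stabilizes_Un: "stabilizes (\<Sigma> \<union> \<Delta>) w \<longleftrightarrow> stabilizes \<Sigma> w \<and> stabilizes \<Delta> w"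
  unfolding stabilizes_def by (rule ball_Un)

lemma derivable_factor_iff:
  assumes "stabilizes \<Sigma> w" and "derivable \<Sigma> u v"
  shows "p @ subst_word \<sigma> u @ q = w \<longleftrightarrow> p @ subst_word \<sigma> v @ q = w"
  using assms(2)
proof (induction arbitrary: \<sigma> p q)
  case (ax u v)
  then show ?case using assms(1) unfolding stabilizes_def by blast
next
  case (subst u v \<tau>)
  then show ?case by (simp add: subst_word_subst_word)
next
  case (ctx u v p' q')
  have "(p @ subst_word \<sigma> p') @ subst_word \<sigma> u @ (subst_word \<sigma> q' @ q) = w \<longleftrightarrow>
        (p @ subst_word \<sigma> p') @ subst_word \<sigma> v @ (subst_word \<sigma> q' @ q) = w"
    by (rule ctx.IH)
  then show ?case by simp
qed auto

lemma isoterm_if_stabilizes: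
  assumes "stabilizes \<Sigma> w"
  shows "isoterm \<Sigma> w"
  unfolding isoterm_def
proof (intro allI impI)
  fix v
  assume "derivable \<Sigma> w v"
  from derivable_factor_iff[OF assms this, of "[]" "\<lambda>z. [z]" "[]"] show "v = w" by simp
qed

definition almost_linear :: "nat \<Rightarrow> nat \<Rightarrow> word \<Rightarrow> bool" where
  "almost_linear k x w \<longleftrightarrow> count_list w x \<le> k \<and> (\<forall>c. c \<noteq> x \<longrightarrow> count_list w c \<le> 1)"

lemma almost_linear_count_le: "almost_linear k x w \<Longrightarrow> count_list w c \<le> max 1 k"
  unfolding almost_linear_def by (cases "c = x") auto

lemma count_list_subst_word_ge:
  assumes "c \<in> set (\<sigma> z)"
  shows "count_list u z \<le> count_list (subst_word \<sigma> u) c"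
proof -
  have "0 < count_list (\<sigma> z) c"
    using assms by (metis count_list_0_iff gr0I)
  then show ?thesis by (induction u) auto
qed

lemma count_list_factor_ge:
  assumes "p @ subst_word \<sigma> u @ q = w" and "c \<in> set (\<sigma> z)"
  shows "count_list u z \<le> count_list w c"
  using count_list_subst_word_ge[of c \<sigma> z u] assms by auto

lemma almost_linear_repeated_var:
  assumes "almost_linear k x w" and "p @ subst_word \<sigma> u @ q = w" and "2 \<le> count_list u z"
  shows "set (\<sigma> z) \<subseteq> {x}"
proof
  fix c
  assume "c \<in> set (\<sigma> z)"
  with assms(2) have "count_list u z \<le> count_list w c" by (rule count_list_factor_ge)
  with assms(3) have "2 \<le> count_list w c" by (rule le_trans)
  with assms(1) show "c \<in> {x}" unfolding almost_linear_def by fastforce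
qed

lemma almost_linear_frequent_var:
  assumes "almost_linear k x w" and "p @ subst_word \<sigma> u @ q = w" and "max 1 k < count_list u z"
  shows "\<sigma> z = []"
proof (rule ccontr)
  assume "\<sigma> z \<noteq> []"
  then obtain c where "c \<in> set (\<sigma> z)" by (cases "\<sigma> z") auto
  with assms(2) have "count_list u z \<le> count_list w c" by (rule count_list_factor_ge)
  with almost_linear_count_le[OF assms(1), of c] assms(3) show False by (simp add: max_def)
qed

lemma append_commute_if_set_singleton:
  assumes "set xs \<subseteq> {x}" and "set ys \<subseteq> {x}"
  shows "xs @ ys = ys @ xs"
proof -
  have "xs = replicate (length xs) x" "ys = replicate (length ys) x"
    using assms by (auto intro!: replicate_length_same[symmetric])
  then show ?thesis by (metis add.commute replicate_add)
qed

lemma subst_word_O_ids: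
  assumes "(u, v) \<in> O_ids" and "\<sigma> 0 @ \<sigma> 1 = \<sigma> 1 @ \<sigma> 0"
  shows "subst_word \<sigma> u = subst_word \<sigma> v"
proof -
  have "\<sigma> 0 @ \<sigma> 1 @ r = \<sigma> 1 @ \<sigma> 0 @ r" for r
    using assms(2) by (metis append.assoc)
  then show ?thesis using assms by (auto simp: O_ids_def)
qed

lemma stabilizes_O_ids:
  assumes "almost_linear k x w"
  shows "stabilizes O_ids w"
  unfolding stabilizes_def
proof (clarify)
  fix u v \<sigma> p q
  assume uv: "(u, v) \<in> O_ids"
  have "\<sigma> 0 @ \<sigma> 1 = \<sigma> 1 @ \<sigma> 0" if "p @ subst_word \<sigma> s @ q = w" and "s \<in> {u, v}" for s
  proof -
    have "2 \<le> count_list s 0" "2 \<le> count_list s 1"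
      using uv that(2) by (auto simp: O_ids_def)
    then show ?thesis
      using almost_linear_repeated_var[OF assms that(1)] append_commute_if_set_singleton
      by metis
  qed
  then show "p @ subst_word \<sigma> u @ q = w \<longleftrightarrow> p @ subst_word \<sigma> v @ q = w"
    using subst_word_O_ids[OF uv] by (metis insertCI)
qed

lemma stabilizes_if_equal_after_erasure:
  assumes "almost_linear k x w"
    and "\<And>u v. (u, v) \<in> \<Sigma> \<Longrightarrow> removeAll z u = removeAll z v"
    and "\<And>u v. (u, v) \<in> \<Sigma> \<Longrightarrow> max 1 k < count_list u z \<and> max 1 k < count_list v z"
  shows "stabilizes \<Sigma> w"
  unfolding stabilizes_def
proof (clarify)
  fix u v \<sigma> p q
  assume uv: "(u, v) \<in> \<Sigma>"
  have "subst_word \<sigma> u = subst_word \<sigma> v" if "p @ subst_word \<sigma> s @ q = w" and "s \<in> {u, v}" for s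
  proof -
    have "\<sigma> z = []"
      using almost_linear_frequent_var[OF assms(1) that(1)] assms(3)[OF uv] that(2) by blast
    then show ?thesis by (metis assms(2)[OF uv] subst_word_removeAll)
  qed
  then show "p @ subst_word \<sigma> u @ q = w \<longleftrightarrow> p @ subst_word \<sigma> v @ q = w"
    by (metis insertCI)
qed

lemma removeAll_A_id:
  "removeAll 0 (fst (A_id n)) = [1..<n+1]" "removeAll 0 (snd (A_id n)) = [1..<n+1]"
proof -
  have "removeAll 0 (concat (map (\<lambda>i. [i, 0]) [Suc m..<k])) = [Suc m..<k]" for m k :: nat
    by (induction k) auto
  then show "removeAll 0 (fst (A_id n)) = [1..<n+1]" "removeAll 0 (snd (A_id n)) = [1..<n+1]"
    by (simp_all add: A_id_def removeAll_filter_not_eq)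
qed

lemma count_list_A_id: "count_list (fst (A_id n)) 0 = n" "count_list (snd (A_id n)) 0 = n"
proof -
  have "count_list (concat (map (\<lambda>i. [i, 0]) [Suc m..<k])) 0 = k - Suc m" for m k :: nat
    by (induction k) auto
  then show "count_list (fst (A_id n)) 0 = n" "count_list (snd (A_id n)) 0 = n"
    by (simp_all add: A_id_def count_list_replicate)
qed

lemma stabilizes_A_id:
  assumes "almost_linear k x w" and "k < n" and "2 \<le> n"
  shows "stabilizes {A_id n} w"
  by (rule stabilizes_if_equal_after_erasure[OF assms(1), where z = 0])
    (use assms(2,3) removeAll_A_id count_list_A_id in \<open>auto simp: prod_eq_iff\<close>)

lemma stabilizes_B_ids:
  assumes "almost_linear k x w" and "k < n - 1" and "3 \<le> n"
  shows "stabilizes (B_ids n) w"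
  by (rule stabilizes_if_equal_after_erasure[OF assms(1), where z = 0])
    (use assms(2,3) in \<open>auto simp: B_ids_def B_word_def count_list_replicate removeAll_filter_not_eq\<close>)

lemma isoterm_A_var:
  assumes "almost_linear k x w" and "k < n" and "2 \<le> n"
  shows "isoterm (A_var n) w"
proof (rule isoterm_if_stabilizes)
  show "stabilizes (A_var n) w"
    unfolding A_var_def stabilizes_Un
    using stabilizes_O_ids[OF assms(1)] stabilizes_A_id[OF assms] ..
qed

lemma isoterm_AB_var:
  assumes "almost_linear k x w" and "k < n - 1" and "3 \<le> n"
  shows "isoterm (AB_var n) w"
proof (rule isoterm_if_stabilizes)
  have "stabilizes {A_id n} w"
    using stabilizes_A_id[OF assms(1)] assms(2,3) by simp
  then show "stabilizes (AB_var n) w"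
    unfolding AB_var_def A_var_def stabilizes_Un
    using stabilizes_O_ids[OF assms(1)] stabilizes_B_ids[OF assms] by blast
qed

lemma rigid_limited_almost_linear:
  assumes "rigid_limited k w"
  obtains x where "almost_linear k x w"
proof -
  obtain x ts es where distinct: "distinct (x # ts)" and len: "length es = length ts + 1"
    and w: "w = replicate (es ! 0) x @
      concat (map (\<lambda>i. ts ! i # replicate (es ! (i + 1)) x) [0..<length ts])"
    and sum: "sum_list es \<le> k"
    using assms unfolding rigid_limited_def by blast
  obtain e0 es' where es: "es = e0 # es'" and len': "length es' = length ts"
    using len by (cases es) auto
  have ts_ne_x: "ts ! i \<noteq> x" if "i < length ts" for i
    using distinct that nth_mem by force
  have "removeAll x w =
      concat (map (\<lambda>i. removeAll x (ts ! i # replicate (es' ! i) x)) [0..<length ts])"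
    by (simp add: w es removeAll_concat removeAll_replicate o_def del: removeAll.simps)
  also have "\<dots> = concat (map (\<lambda>i. [ts ! i]) [0..<length ts])"
    by (intro arg_cong[where f = concat] map_cong) (auto simp: ts_ne_x[symmetric] removeAll_replicate)
  also have "\<dots> = ts"
    by (simp add: map_nth)
  finally have "removeAll x w = ts" .
  with distinct have count_other: "count_list w c \<le> 1" if "c \<noteq> x" for c
    using count_list_removeAll[OF that, of w] distinct_count_list_le[of ts c] by simp
  have "count_list w x =
      e0 + sum_list (map (\<lambda>i. count_list (ts ! i # replicate (es' ! i) x) x) [0..<length ts])"
    by (simp add: w es count_list_concat count_list_replicate o_def del: count_list.simps)
  also have "\<dots> = e0 + sum_list (map (\<lambda>i. es' ! i) [0..<length es'])"
    using len' by (intro arg_cong[where f = "\<lambda>l. e0 + sum_list l"] map_cong)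
      (auto simp: ts_ne_x count_list_replicate)
  also have "\<dots> = sum_list es"
    by (simp add: es map_nth)
  finally have "count_list w x = sum_list es" .
  with count_other sum have "almost_linear k x w"
    unfolding almost_linear_def by simp
  then show thesis by (rule that)
qed

lemma rigid_limited_B_word:
  assumes "j \<le> n - 1"
  shows "rigid_limited (n - 1) (B_word n j)"
  unfolding rigid_limited_def B_word_def
  by (rule exI[of _ 0], rule exI[of _ "[1]"], rule exI[of _ "[n - 1 - j, j]"]) (use assms in auto)

theorem lemma3p2:
  fixes n :: nat
  assumes "n \<ge> 3"
  shows "(\<forall>w. rigid_limited (n - 1) w \<longrightarrow> isoterm (A_var n) w)
       \<and> (\<forall>w \<in> B_words n. isoterm (A_var n) w)
       \<and> (\<forall>w. rigid_limited (n - 2) w \<longrightarrow> isoterm (AB_var n) w)"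
proof (intro conjI allI impI ballI)
  fix w
  assume "rigid_limited (n - 1) w"
  then show "isoterm (A_var n) w"
    by (rule rigid_limited_almost_linear) (rule isoterm_A_var, use assms in auto)
next
  fix w
  assume "w \<in> B_words n"
  then obtain j where "w = B_word n j" and "j \<le> n - 1"
    unfolding B_words_def by blast
  then have "rigid_limited (n - 1) w" by (metis rigid_limited_B_word)
  then show "isoterm (A_var n) w"
    by (rule rigid_limited_almost_linear) (rule isoterm_A_var, use assms in auto)
next
  fix w
  assume "rigid_limited (n - 2) w"
  then show "isoterm (AB_var n) w"
    by (rule rigid_limited_almost_linear) (rule isoterm_AB_var, use assms in auto)
qed

end
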